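(* Let $\mu>0$, let $V^{*}_{\mu}$ be a fixed point of the quasi-optimal Bellman operator $\mathcal{B}_{\mu}$, and let $Q^{*}_{\mu}(s,a)=\mathbb{E}_{S'\sim\mathbf{P}(\cdot\mid s,a)}[R(S',s,a)+\gamma V^{*}_{\mu}(S')]$. Suppose that for each $s$ the supremum defining $\mathcal{B}_{\mu}V^{*}_{\mu}(s)$ is attained by the induced policy $\pi^{*}_{\mu}(\cdot\mid s)\in\Pi_{\mathbf{C}}$ of the form $$\pi^{*}_{\mu}(a\mid s)=\Big(\frac{Q^{*}_{\mu}(s,a)}{2\mu}-\frac{\int_{\mathcal{W}_s}Q^{*}_{\mu}(s,a')\,da'}{2\mu\,\sigma(\mathcal{W}_s)}+\frac{1}{\sigma(\mathcal{W}_s)}\Big)^{+},$$ where $\mathcal{W}_s$ is the support of $\pi^{*}_{\mu}(\cdot\mid s)$. Then there exist functions $\eta:\mathcal{S}\to[-\mu\mathbf{C},0]$ and $\varpi:\mathcal{S}\times\mathcal{A}\to[0,\infty)$ with $\varpi(s,a)\,\pi^{*}_{\mu}(a\mid s)=0$ for all $(s,a)$, such that for every $s\in\mathcal{S}$, $a\in\mathcal{A}$, $$\mathbb{E}_{S'\sim\mathbf{P}(\cdot\mid s,a)}\big[R(S',s,a)+\gamma V^{*}_{\mu}(S')\big]-\mu\big(2\pi^{*}_{\mu}(a\mid s)-1\big)-\eta(s)+\varpi(s,a)=V^{*}_{\mu}(s).$$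
   Context: Consider a Markov decision process with state space $\mathcal{S}$, continuous action space $\mathcal{A}\subseteq\mathbb{R}$ ($\sigma$ = Lebesgue measure), transition kernel $\mathbf{P}$, bounded reward $R(s',s,a)$, discount $\gamma\in[0,1)$. $\Pi_{\mathbf{C}}$ is the class of conditional densities $\pi(\cdot\mid s)$ on $\mathcal{A}$ with $\pi(a\mid s)\le\mathbf{C}$ for all $s,a$ (standing assumption: all policies lie in $\Pi_{\mathbf{C}}$). For bounded $V$, $Q_V(s,a)=\mathbb{E}_{S'\sim\mathbf{P}(\cdot\mid s,a)}[R(S',s,a)+\gamma V(S')]$ and $\mathcal{B}_{\mu}V(s)=\sup_{\pi\in\Pi_{\mathbf{C}}}\int_{\mathcal{A}}[Q_V(s,a)\pi(a\mid s)+\mu(\pi(a\mid s)-\pi(a\mid s)^2)]\,da$. $x^+=\max(x,0)$. *)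

theory Defs
  imports "HOL-Probability.Probability"
begin

definition Qfun :: "('s \<Rightarrow> real \<Rightarrow> 's measure) \<Rightarrow> ('s \<Rightarrow> 's \<Rightarrow> real \<Rightarrow> real) \<Rightarrow> real
    \<Rightarrow> ('s \<Rightarrow> real) \<Rightarrow> 's \<Rightarrow> real \<Rightarrow> real" where
  "Qfun P R \<gamma> V s a = (\<integral>s'. R s' s a + \<gamma> * V s' \<partial>(P s a))"

definition PiC :: "real \<Rightarrow> real set \<Rightarrow> 's set \<Rightarrow> ('s \<Rightarrow> real \<Rightarrow> real) set" where
  "PiC C A S = {\<pi>. \<forall>s\<in>S. (\<forall>a\<in>A. 0 \<le> \<pi> s a \<and> \<pi> s a \<le> C)
      \<and> set_borel_measurable lborel A (\<pi> s)
      \<and> set_integrable lborel A (\<pi> s)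
      \<and> (LINT a:A|lborel. \<pi> s a) = 1}"

definition Bobj :: "('s \<Rightarrow> real \<Rightarrow> 's measure) \<Rightarrow> ('s \<Rightarrow> 's \<Rightarrow> real \<Rightarrow> real) \<Rightarrow> real
    \<Rightarrow> real set \<Rightarrow> real \<Rightarrow> ('s \<Rightarrow> real) \<Rightarrow> ('s \<Rightarrow> real \<Rightarrow> real) \<Rightarrow> 's \<Rightarrow> real" where
  "Bobj P R \<gamma> A \<mu> V \<pi> s =
     (LINT a:A|lborel. Qfun P R \<gamma> V s a * \<pi> s a + \<mu> * (\<pi> s a - (\<pi> s a)\<^sup>2))"

definition Bmu :: "('s \<Rightarrow> real \<Rightarrow> 's measure) \<Rightarrow> ('s \<Rightarrow> 's \<Rightarrow> real \<Rightarrow> real) \<Rightarrow> real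
    \<Rightarrow> real \<Rightarrow> real set \<Rightarrow> 's set \<Rightarrow> real \<Rightarrow> ('s \<Rightarrow> real) \<Rightarrow> 's \<Rightarrow> real" where
  "Bmu P R \<gamma> C A S \<mu> V s = (SUP \<pi> \<in> PiC C A S. Bobj P R \<gamma> A \<mu> V \<pi> s)"

end

theory Submission
  imports Defs
begin

text \<open>The closed form of the optimal policy says that, at each state, \<open>\<pi>\<close> is the positive
  part of \<open>(Q - c) / (2\<mu>)\<close> for a state-dependent constant \<open>c\<close>. This is the KKT system of the
  concave objective \<open>\<integral> Q \<pi> + \<mu> (\<pi> - \<pi>\<^sup>2)\<close>: the slack \<open>\<omega> = c - Q + 2\<mu>\<pi>\<close> is nonnegative and
  vanishes where \<open>\<pi> > 0\<close>. Integrating \<open>Q \<pi> = c \<pi> + 2\<mu>\<pi>\<^sup>2\<close> against the density \<open>\<pi>\<close> turns the fixed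
  point equation into \<open>V = c + \<mu> + \<mu> \<integral>\<pi>\<^sup>2\<close>, so \<open>\<eta> = -\<mu> \<integral>\<pi>\<^sup>2\<close> works, and
  \<open>0 \<le> \<integral>\<pi>\<^sup>2 \<le> C \<integral>\<pi> = C\<close> because \<open>\<pi> \<le> C\<close>.\<close>

lemma positive_part_complementary_slackness:
  fixes \<mu> p q c :: real
  assumes "0 < \<mu>" and "p = max 0 ((q - c) / (2 * \<mu>))"
  shows "0 \<le> c - q + 2 * \<mu> * p" and "(c - q + 2 * \<mu> * p) * p = 0"
proof -
  have "c - q + 2 * \<mu> * p = (if q \<le> c then c - q else 0) \<and> p = (if q \<le> c then 0 else p)"
    using assms by (auto simp: max_def field_simps)
  then show "0 \<le> c - q + 2 * \<mu> * p" and "(c - q + 2 * \<mu> * p) * p = 0"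
    by (auto split: if_splits)
qed

text \<open>Also valid for \<open>m = 0\<close>, where both sides read \<open>q / (2\<mu>)\<close> since \<open>x / 0 = 0\<close>.\<close>
lemma closed_form_policy_eq:
  fixes \<mu> q k m :: real
  assumes "0 < \<mu>"
  shows "q / (2 * \<mu>) - k / (2 * \<mu> * m) + 1 / m = (q - (k - 2 * \<mu>) / m) / (2 * \<mu>)"
  using assms by (cases "m = 0") (simp_all add: field_simps)

lemma bounded_density_square_integral:
  fixes f :: "'a \<Rightarrow> real"
  assumes bounds: "\<forall>x\<in>A. 0 \<le> f x \<and> f x \<le> C"
    and meas: "set_borel_measurable M A f" and int: "set_integrable M A f"
  shows "set_integrable M A (\<lambda>x. (f x)\<^sup>2)"
    and "0 \<le> (LINT x:A|M. (f x)\<^sup>2)"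
    and "(LINT x:A|M. (f x)\<^sup>2) \<le> C * (LINT x:A|M. f x)"
proof -
  have "(\<lambda>x. (indicator A x *\<^sub>R f x)\<^sup>2) \<in> borel_measurable M"
    using meas unfolding set_borel_measurable_def by measurable
  moreover have "(\<lambda>x. (indicator A x *\<^sub>R f x)\<^sup>2) = (\<lambda>x. indicator A x *\<^sub>R (f x)\<^sup>2)"
    by (auto simp: indicator_def fun_eq_iff)
  ultimately have meas2: "set_borel_measurable M A (\<lambda>x. (f x)\<^sup>2)"
    unfolding set_borel_measurable_def by simp
  have le: "(f x)\<^sup>2 \<le> C * f x" if "x \<in> A" for x
    using bounds that by (simp add: power2_eq_square mult_right_mono)
  have intC: "set_integrable M A (\<lambda>x. C * f x)"
    using int by auto
  show int2: "set_integrable M A (\<lambda>x. (f x)\<^sup>2)"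
    by (rule set_integrable_bound[OF intC meas2]) (use le bounds in \<open>auto intro!: AE_I2\<close>)
  show "0 \<le> (LINT x:A|M. (f x)\<^sup>2)"
    unfolding set_lebesgue_integral_def by (rule integral_nonneg_AE) (auto simp: indicator_def)
  have "(LINT x:A|M. (f x)\<^sup>2) \<le> (LINT x:A|M. C * f x)"
    by (rule set_integral_mono[OF int2 intC le])
  then show "(LINT x:A|M. (f x)\<^sup>2) \<le> C * (LINT x:A|M. f x)"
    by simp
qed

lemma set_integral_objective_complementary_slackness:
  fixes f q :: "'a \<Rightarrow> real"
  assumes A: "A \<in> sets M"
    and int: "set_integrable M A f" "set_integrable M A (\<lambda>x. (f x)\<^sup>2)"
    and normalized: "(LINT x:A|M. f x) = 1"
    and slackness: "\<forall>x\<in>A. (c - q x + 2 * \<mu> * f x) * f x = 0"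
  shows "(LINT x:A|M. q x * f x + \<mu> * (f x - (f x)\<^sup>2)) = c + \<mu> + \<mu> * (LINT x:A|M. (f x)\<^sup>2)"
proof -
  have "(LINT x:A|M. q x * f x + \<mu> * (f x - (f x)\<^sup>2))
      = (LINT x:A|M. (c + \<mu>) * f x + \<mu> * (f x)\<^sup>2)"
    using slackness
    by (intro set_lebesgue_integral_cong[OF A]) (auto simp: algebra_simps power2_eq_square)
  also have "\<dots> = (c + \<mu>) * (LINT x:A|M. f x) + \<mu> * (LINT x:A|M. (f x)\<^sup>2)"
    using int by (subst set_integral_add(2)) auto
  finally show ?thesis
    using normalized by simp
qed

theorem theorem3:
  fixes SM :: "'s measure"
    and P :: "'s \<Rightarrow> real \<Rightarrow> 's measure"
    and R :: "'s \<Rightarrow> 's \<Rightarrow> real \<Rightarrow> real"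
    and \<gamma> \<mu> C :: real
    and A :: "real set"
    and V :: "'s \<Rightarrow> real"
    and \<pi> :: "'s \<Rightarrow> real \<Rightarrow> real"
    and W :: "'s \<Rightarrow> real set"
  assumes A_meas: "A \<in> sets lborel"
    and gamma: "0 \<le> \<gamma>" "\<gamma> < 1"
    and mu: "\<mu> > 0"
    and P_prob: "\<And>s a. prob_space (P s a)"
    and P_sets: "\<And>s a. sets (P s a) = sets SM"
    and P_kernel: "(\<lambda>(s, a). P s a) \<in> measurable (SM \<Otimes>\<^sub>M lborel) (subprob_algebra SM)"
    and R_meas: "\<And>s a. (\<lambda>s'. R s' s a) \<in> borel_measurable SM"
    and R_bdd: "\<exists>B. \<forall>s' s a. \<bar>R s' s a\<bar> \<le> B"
    and V_meas: "V \<in> borel_measurable SM"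
    and V_bdd: "\<exists>B. \<forall>s\<in>space SM. \<bar>V s\<bar> \<le> B"
    and fixpoint: "\<forall>s\<in>space SM. V s = Bmu P R \<gamma> C A (space SM) \<mu> V s"
    and pi_class: "\<pi> \<in> PiC C A (space SM)"
    and attained: "\<forall>s\<in>space SM. Bobj P R \<gamma> A \<mu> V \<pi> s = Bmu P R \<gamma> C A (space SM) \<mu> V s"
    and W_def: "\<And>s. W s = {a \<in> A. 0 < \<pi> s a}"
    and pi_form: "\<forall>s\<in>space SM. \<forall>a\<in>A. \<pi> s a =
        max 0 (Qfun P R \<gamma> V s a / (2 * \<mu>)
               - (LINT a':W s|lborel. Qfun P R \<gamma> V s a') / (2 * \<mu> * measure lborel (W s))
               + 1 / measure lborel (W s))"
  shows "\<exists>\<eta> :: 's \<Rightarrow> real. \<exists>\<omega> :: 's \<Rightarrow> real \<Rightarrow> real.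
           (\<forall>s\<in>space SM. - \<mu> * C \<le> \<eta> s \<and> \<eta> s \<le> 0)
         \<and> (\<forall>s\<in>space SM. \<forall>a\<in>A. 0 \<le> \<omega> s a \<and> \<omega> s a * \<pi> s a = 0)
         \<and> (\<forall>s\<in>space SM. \<forall>a\<in>A.
              (\<integral>s'. R s' s a + \<gamma> * V s' \<partial>(P s a)) - \<mu> * (2 * \<pi> s a - 1) - \<eta> s + \<omega> s a = V s)"
proof -
  define Q where "Q = Qfun P R \<gamma> V"
  define c where "c s = ((LINT a:W s|lborel. Q s a) - 2 * \<mu>) / measure lborel (W s)" for s
  define \<omega> where "\<omega> s a = c s - Q s a + 2 * \<mu> * \<pi> s a" for s a
  define \<eta> where "\<eta> s = - \<mu> * (LINT a:A|lborel. (\<pi> s a)\<^sup>2)" for s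
  have slack: "0 \<le> \<omega> s a \<and> \<omega> s a * \<pi> s a = 0" if "s \<in> space SM" "a \<in> A" for s a
  proof -
    have "\<pi> s a = max 0 ((Q s a - c s) / (2 * \<mu>))"
      using pi_form that unfolding Q_def c_def closed_form_policy_eq[OF mu] by simp
    then show ?thesis
      unfolding \<omega>_def using positive_part_complementary_slackness[OF mu] by blast
  qed
  have value_eq: "V s = c s + \<mu> - \<eta> s" and \<eta>_bounds: "- \<mu> * C \<le> \<eta> s \<and> \<eta> s \<le> 0"
    if s: "s \<in> space SM" for s
  proof -
    have density: "\<forall>a\<in>A. 0 \<le> \<pi> s a \<and> \<pi> s a \<le> C" "set_borel_measurable lborel A (\<pi> s)"
        "set_integrable lborel A (\<pi> s)" "(LINT a:A|lborel. \<pi> s a) = 1"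
      using pi_class s unfolding PiC_def by auto
    note square = bounded_density_square_integral[OF density(1-3)]
    have "V s = Bobj P R \<gamma> A \<mu> V \<pi> s"
      using fixpoint attained s by simp
    also have "\<dots> = c s + \<mu> + \<mu> * (LINT a:A|lborel. (\<pi> s a)\<^sup>2)"
      unfolding Bobj_def Q_def[symmetric] using slack s \<omega>_def
      by (intro set_integral_objective_complementary_slackness A_meas density square) auto
    finally show "V s = c s + \<mu> - \<eta> s"
      by (simp add: \<eta>_def)
    show "- \<mu> * C \<le> \<eta> s \<and> \<eta> s \<le> 0"
      using square(2,3) density(4) mu by (simp add: \<eta>_def)
  qed
  have "(\<integral>s'. R s' s a + \<gamma> * V s' \<partial>(P s a)) - \<mu> * (2 * \<pi> s a - 1) - \<eta> s + \<omega> s a = V s"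
    if "s \<in> space SM" for s a
    using value_eq[OF that] by (simp add: \<omega>_def Q_def Qfun_def algebra_simps)
  then show ?thesis
    using slack \<eta>_bounds by blast
qed

end
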